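(* Let $W$ be an entanglement witness on $\mathbb{C}^m\otimes\mathbb{C}^n$. Then $W^+$ is either an entanglement witness or positive semidefinite (a state, up to normalization). Specifically: (i) $W^+$ is an entanglement witness if and only if $W$ detects a real entangled state; (ii) $W^+$ is a PPT state if and only if $W$ detects no real entangled state and $W^\Gamma$ is either an NPT state or an entanglement witness detecting no real entangled state; (iii) $W^+$ is an NPT state if and only if $W$ detects no real entangled state and $W^\Gamma$ is an entanglement witness detecting at least one real entangled state. Moreover, if $W^+$ is an NPT state, then every real entangled state detected by $W^\Gamma$ is NPT.
   Context: An entanglement witness on $\mathbb{C}^m\otimes\mathbb{C}^n$ is a Hermitian matrix $W$ with $\mathrm{tr}(W\sigma)\ge0$ for all separable states $\sigma$ and $\mathrm{tr}(W\sigma)<0$ for at least one entangled state; $W$ detects $\rho$ if $\mathrm{tr}(W\rho)<0$. A real state is one whose density matrix has real entries. $W^+=\frac12(W+W^* )$ where $W^*$ is the entrywise complex conjugate; $M^\Gamma$ is the partial transpose with respect to the first subsystem. A (possibly unnormalized) positive semidefinite $\rho$ is PPT if $\rho^\Gamma\ge0$ and NPT otherwise. *)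

theory Defs
  imports "HOL-Analysis.Analysis"
begin

text \<open>Operators on C^m tensor C^n are matrices indexed by pairs (i,j) with i ranging over
  the finite type 'm (first subsystem, dimension CARD('m)) and j over 'n (second subsystem).\<close>

type_synonym ('m, 'n) bop = "complex ^ ('m \<times> 'n) ^ ('m \<times> 'n)"

definition mtrace :: "complex ^ 'k ^ 'k \<Rightarrow> complex" where
  "mtrace A = (\<Sum>i\<in>UNIV. A $ i $ i)"

definition hermitian :: "complex ^ 'k ^ 'k \<Rightarrow> bool" where
  "hermitian A \<longleftrightarrow> (\<forall>i j. A $ i $ j = cnj (A $ j $ i))"

definition psd :: "complex ^ 'k ^ 'k \<Rightarrow> bool" where
  "psd A \<longleftrightarrow> hermitian A \<and>
     (\<forall>v :: complex ^ 'k. 0 \<le> Re (\<Sum>i\<in>UNIV. \<Sum>j\<in>UNIV. cnj (v $ i) * A $ i $ j * v $ j))"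

definition is_state :: "complex ^ 'k ^ 'k \<Rightarrow> bool" where
  "is_state A \<longleftrightarrow> psd A \<and> mtrace A = 1"

definition kron :: "complex ^ 'm ^ 'm \<Rightarrow> complex ^ 'n ^ 'n \<Rightarrow> ('m, 'n) bop" where
  "kron A B = (\<chi> r. \<chi> c. A $ fst r $ fst c * B $ snd r $ snd c)"

definition separable :: "('m::finite, 'n::finite) bop \<Rightarrow> bool" where
  "separable \<sigma> \<longleftrightarrow> (\<exists>(K::nat) (p :: nat \<Rightarrow> real) (A :: nat \<Rightarrow> complex ^ 'm ^ 'm)
        (B :: nat \<Rightarrow> complex ^ 'n ^ 'n).
      (\<forall>k<K. 0 \<le> p k \<and> is_state (A k) \<and> is_state (B k)) \<and>
      (\<Sum>k<K. p k) = 1 \<and>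
      \<sigma> = (\<Sum>k<K. p k *\<^sub>R kron (A k) (B k)))"

definition entangled :: "('m::finite, 'n::finite) bop \<Rightarrow> bool" where
  "entangled \<rho> \<longleftrightarrow> is_state \<rho> \<and> \<not> separable \<rho>"

text \<open>W detects rho: tr(W rho) < 0 (the trace is real for Hermitian W and rho).\<close>
definition detects :: "('m::finite, 'n::finite) bop \<Rightarrow> ('m, 'n) bop \<Rightarrow> bool" where
  "detects W \<rho> \<longleftrightarrow> Re (mtrace (W ** \<rho>)) < 0"

definition ent_witness :: "('m::finite, 'n::finite) bop \<Rightarrow> bool" where
  "ent_witness W \<longleftrightarrow> hermitian W \<and>
     (\<forall>\<sigma>. is_state \<sigma> \<and> separable \<sigma> \<longrightarrow> 0 \<le> Re (mtrace (W ** \<sigma>))) \<and>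
     (\<exists>\<rho>. entangled \<rho> \<and> detects W \<rho>)"

definition real_mat :: "complex ^ 'k ^ 'k \<Rightarrow> bool" where
  "real_mat A \<longleftrightarrow> (\<forall>i j. A $ i $ j \<in> \<real>)"

definition mconj :: "complex ^ 'k ^ 'k \<Rightarrow> complex ^ 'k ^ 'k" where
  "mconj A = (\<chi> i. \<chi> j. cnj (A $ i $ j))"

definition realpart :: "complex ^ 'k ^ 'k \<Rightarrow> complex ^ 'k ^ 'k" where
  "realpart A = (1/2 :: real) *\<^sub>R (A + mconj A)"

definition ptrans :: "('m::finite, 'n::finite) bop \<Rightarrow> ('m, 'n) bop" where
  "ptrans A = (\<chi> r. \<chi> c. A $ (fst c, snd r) $ (fst r, snd c))"

text \<open>PPT / NPT for possibly unnormalized positive semidefinite operators.\<close>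
definition PPT :: "('m::finite, 'n::finite) bop \<Rightarrow> bool" where
  "PPT \<rho> \<longleftrightarrow> psd \<rho> \<and> psd (ptrans \<rho>)"

definition NPT :: "('m::finite, 'n::finite) bop \<Rightarrow> bool" where
  "NPT \<rho> \<longleftrightarrow> psd \<rho> \<and> \<not> psd (ptrans \<rho>)"

definition detects_real_ent :: "('m::finite, 'n::finite) bop \<Rightarrow> bool" where
  "detects_real_ent W \<longleftrightarrow> (\<exists>\<rho>. real_mat \<rho> \<and> entangled \<rho> \<and> detects W \<rho>)"

end

theory Submission
  imports Defs
begin

text \<open>Block-positivity passes to W^+,
  since Re tr(W^+ \<rho>) is the average of Re tr(W \<rho>) and Re tr(W conj(\<rho>)) and the
  conjugate of a product state is a product state, and to W^\<Gamma>, since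
  (A \<otimes> B)^\<Gamma> = conj(A) \<otimes> B. A Hermitian block-positive X is either positive semidefinite or a
  witness: a vector v with v^* X v < 0 yields the pure state v v^* / |v|^2, which X detects
  and which therefore cannot be separable. For the real matrix X^+ such a v can be taken real,
  and tr(X^+ \<rho>) = tr(X \<rho>) for real \<rho>; so X^+ is positive semidefinite exactly when X detects
  no real entangled state. Applying this to X = W and to X = W^\<Gamma>, whose real part is
  (W^+)^\<Gamma>, sorts W^+ into witness, PPT state or NPT state. Finally, for real \<rho>,
  tr(W^\<Gamma> \<rho>) = tr(W^+ \<rho>^\<Gamma>), which is nonnegative when W^+ and \<rho>^\<Gamma> are both positive
  semidefinite; so if W^+ is positive semidefinite, every real state detected by W^\<Gamma> is NPT.\<close>

lemma sum_UNIV_prod: "(\<Sum>r\<in>UNIV. f r) = (\<Sum>a\<in>UNIV. \<Sum>b\<in>UNIV. f (a, b))"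
  unfolding sum.cartesian_product UNIV_Times_UNIV by simp

lemma sum_pull_innermost: "(\<Sum>r\<in>R. \<Sum>c\<in>C. \<Sum>t\<in>T. f r c t) = (\<Sum>t\<in>T. \<Sum>r\<in>R. \<Sum>c\<in>C. f r c t)"
proof -
  have "(\<Sum>r\<in>R. \<Sum>c\<in>C. \<Sum>t\<in>T. f r c t) = (\<Sum>r\<in>R. \<Sum>t\<in>T. \<Sum>c\<in>C. f r c t)"
    by (rule sum.cong[OF refl], rule sum.swap)
  also have "\<dots> = (\<Sum>t\<in>T. \<Sum>r\<in>R. \<Sum>c\<in>C. f r c t)"
    by (rule sum.swap)
  finally show ?thesis .
qed

lemma sum_regroup4:
  "(\<Sum>a\<in>A. \<Sum>b\<in>B. \<Sum>a'\<in>A'. \<Sum>b'\<in>B'. f a b a' b') = (\<Sum>b\<in>B. \<Sum>b'\<in>B'. \<Sum>a\<in>A. \<Sum>a'\<in>A'. f a b a' b')"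
proof -
  have "(\<Sum>a\<in>A. \<Sum>b\<in>B. \<Sum>a'\<in>A'. \<Sum>b'\<in>B'. f a b a' b')
      = (\<Sum>b\<in>B. \<Sum>a\<in>A. \<Sum>a'\<in>A'. \<Sum>b'\<in>B'. f a b a' b')"
    by (rule sum.swap)
  also have "\<dots> = (\<Sum>b\<in>B. \<Sum>a\<in>A. \<Sum>b'\<in>B'. \<Sum>a'\<in>A'. f a b a' b')"
    by (rule sum.cong[OF refl], rule sum.cong[OF refl], rule sum.swap)
  also have "\<dots> = (\<Sum>b\<in>B. \<Sum>b'\<in>B'. \<Sum>a\<in>A. \<Sum>a'\<in>A'. f a b a' b')"
    by (rule sum.cong[OF refl], rule sum.swap)
  finally show ?thesis .
qed

lemma sum_exchange_outer_inner:
  "(\<Sum>x\<in>A. \<Sum>b\<in>B. \<Sum>y\<in>A. f x b y) = (\<Sum>x\<in>A. \<Sum>b\<in>B. \<Sum>y\<in>A. f y b x)"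
proof -
  have "(\<Sum>x\<in>A. \<Sum>b\<in>B. \<Sum>y\<in>A. f x b y) = (\<Sum>x\<in>A. \<Sum>y\<in>A. \<Sum>b\<in>B. f x b y)"
    by (rule sum.cong[OF refl], rule sum.swap)
  also have "\<dots> = (\<Sum>y\<in>A. \<Sum>x\<in>A. \<Sum>b\<in>B. f x b y)"
    by (rule sum.swap)
  also have "\<dots> = (\<Sum>y\<in>A. \<Sum>b\<in>B. \<Sum>x\<in>A. f x b y)"
    by (rule sum.cong[OF refl], rule sum.swap)
  finally show ?thesis .
qed

section \<open>Positive semidefinite matrices\<close>

definition sesq :: "complex ^ 'k::finite ^ 'k \<Rightarrow> complex ^ 'k \<Rightarrow> complex ^ 'k \<Rightarrow> complex" where
  "sesq A x y = (\<Sum>i\<in>UNIV. \<Sum>j\<in>UNIV. cnj (x $ i) * A $ i $ j * y $ j)"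

lemma psd_iff_sesq: "psd A \<longleftrightarrow> hermitian A \<and> (\<forall>v. 0 \<le> Re (sesq A v v))"
  by (simp add: psd_def sesq_def)

lemma sesq_add_scaled_left: "sesq A (\<chi> i. x$i + c * y$i) z = sesq A x z + cnj c * sesq A y z"
  by (simp add: sesq_def algebra_simps sum.distrib sum_distrib_left)

lemma sesq_add_scaled_right: "sesq A z (\<chi> i. x$i + c * y$i) = sesq A z x + c * sesq A z y"
  by (simp add: sesq_def algebra_simps sum.distrib sum_distrib_left)

lemma sesq_eq_sum_row: "sesq A x y = (\<Sum>i\<in>UNIV. cnj (x$i) * (\<Sum>j\<in>UNIV. A$i$j * y$j))"
  by (simp add: sesq_def sum_distrib_left mult.assoc)

lemma sesq_axis_left: "sesq A (axis k 1) z = (\<Sum>j\<in>UNIV. A$k$j * z$j)"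
  unfolding sesq_eq_sum_row axis_def
  by (simp add: if_distrib[where f=cnj] if_distrib[where f="\<lambda>t. t * _"] sum.delta cong: if_cong)

lemma sesq_axis_right: "sesq A z (axis k 1) = (\<Sum>i\<in>UNIV. cnj (z$i) * A$i$k)"
  unfolding sesq_def axis_def
  by (simp add: if_distrib[where f="\<lambda>t. _ * t"] sum.delta cong: if_cong)

lemma sesq_axis_axis: "sesq A (axis i 1) (axis j 1) = A$i$j"
  by (simp only: sesq_axis_left) (simp add: axis_def if_distrib[where f="\<lambda>t. _ * t"] sum.delta cong: if_cong)

lemma hermitian_cnj_nth [simp]: "hermitian A \<Longrightarrow> cnj (A$i$j) = A$j$i"
  unfolding hermitian_def by (metis complex_cnj_cnj)

lemma hermitian_diag_real: "hermitian A \<Longrightarrow> A$k$k = of_real (Re (A$k$k))"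
  unfolding hermitian_def by (metis Reals_cnj_iff complex_is_Real_iff of_real_Re)

lemma psd_diag_nonneg: "psd A \<Longrightarrow> 0 \<le> Re (A$k$k)"
  by (metis psd_iff_sesq sesq_axis_axis)

lemma psd_diag_zero_row:
  assumes psd: "psd A" and zero: "A$k$k = 0"
  shows "A$k$j = 0"
proof (rule ccontr)
  assume nz: "A$k$j \<noteq> 0"
  define n where "n = (cmod (A$k$j))\<^sup>2"
  define r where "r = (\<bar>Re (A$j$j)\<bar> + 1) / (2 * n)"
  define c where "c = - of_real r * A$k$j"
  define x where "x = (\<chi> i. axis j 1 $ i + c * axis k 1 $ i)"
  have n_pos: "n > 0" using nz by (simp add: n_def)
  have "sesq A x x = A$j$j + c * A$j$k + cnj c * A$k$j + cnj c * c * A$k$k"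
    unfolding x_def sesq_add_scaled_left sesq_add_scaled_right sesq_axis_axis
    by (simp add: algebra_simps)
  also have "\<dots> = A$j$j - 2 * of_real r * (A$k$j * cnj (A$k$j))"
    using psd zero by (simp add: psd_def c_def ring_distribs mult_ac)
  also have "\<dots> = A$j$j - of_real (2 * r * n)"
    by (simp add: n_def flip: complex_norm_square)
  finally have "Re (sesq A x x) = Re (A$j$j) - 2 * r * n"
    by simp
  also have "2 * r * n = \<bar>Re (A$j$j)\<bar> + 1"
    using n_pos by (simp add: r_def)
  finally have "Re (sesq A x x) < 0"
    by linarith
  then show False
    using psd unfolding psd_iff_sesq by (meson not_le)
qed

lemma psd_schur_complement:
  assumes psd: "psd A" and nz: "A$k$k \<noteq> 0"
  shows "psd (\<chi> i j. A$i$j - A$i$k * A$k$j / A$k$k)" (is "psd ?B")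
  unfolding psd_iff_sesq
proof (intro conjI allI)
  have herm: "hermitian A" using psd by (simp add: psd_def)
  define a where "a = Re (A$k$k)"
  have akk: "A$k$k = of_real a" using hermitian_diag_real[OF herm] by (simp add: a_def)
  have a_nz: "of_real a \<noteq> (0::complex)" using nz akk by simp
  show "hermitian ?B"
    unfolding hermitian_def using herm by (simp add: akk mult.commute)
  fix x :: "complex ^ 'a"
  define s where "s = (\<Sum>j\<in>UNIV. A$k$j * x$j)"
  define c where "c = - s / of_real a"
  define y where "y = (\<chi> i. x$i + c * axis k 1 $ i)"
  have s_cnj: "(\<Sum>i\<in>UNIV. cnj (x$i) * A$i$k) = cnj s"
    unfolding s_def cnj_sum using herm by (simp add: mult.commute)
  have "sesq ?B x x
      = sesq A x x - (\<Sum>i\<in>UNIV. \<Sum>j\<in>UNIV. cnj (x$i) * A$i$k * (A$k$j * x$j) / of_real a)"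
    unfolding sesq_def akk by (simp add: algebra_simps sum_subtractf)
  also have "\<dots> = sesq A x x - (\<Sum>i\<in>UNIV. cnj (x$i) * A$i$k) * s / of_real a"
    unfolding s_def sum_product sum_divide_distrib ..
  also have "\<dots> = sesq A y y"
  proof -
    have "sesq A x (axis k 1) = cnj s"
      using s_cnj by (simp add: sesq_axis_right)
    moreover have "sesq A (axis k 1) x = s"
      by (simp add: sesq_axis_left s_def)
    moreover have "sesq A (axis k 1) (axis k 1) = of_real a"
      by (simp only: sesq_axis_axis akk)
    ultimately have "sesq A y y = sesq A x x + c * cnj s + cnj c * (s + c * of_real a)"
      unfolding y_def sesq_add_scaled_left sesq_add_scaled_right by (simp add: algebra_simps)
    then show ?thesis
      using a_nz s_cnj by (simp add: c_def field_simps)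
  qed
  finally show "0 \<le> Re (sesq ?B x x)"
    using psd unfolding psd_iff_sesq by simp
qed

lemma psd_pivot_outer_factor:
  assumes psd: "psd A" and nz: "A$k$k \<noteq> 0"
  obtains l where "\<And>i j. A$i$k * A$k$j / A$k$k = cnj (l$i) * l$j"
proof -
  have herm: "hermitian A" using psd by (simp add: psd_def)
  define a where "a = Re (A$k$k)"
  have akk: "A$k$k = of_real a" using hermitian_diag_real[OF herm] by (simp add: a_def)
  have "0 \<le> a" using psd_diag_nonneg[OF psd, of k] by (simp add: a_def)
  moreover have "a \<noteq> 0" using nz akk by simp
  ultimately have "a > 0" by simp
  then have sq: "of_real (sqrt a) * of_real (sqrt a) = (of_real a :: complex)"
    by (simp flip: of_real_mult)
  show thesis
    by (rule that[of "\<chi> j. A$k$j / of_real (sqrt a)"]) (use herm in \<open>simp add: akk flip: sq\<close>)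
qed

(* Cholesky-style peeling: a zero pivot forces its row and column to vanish, a nonzero pivot
   splits off a rank-one term and leaves the psd Schur complement, which is supported on S. *)
lemma psd_gram_supported:
  fixes A :: "complex ^ 'k::finite ^ 'k"
  assumes "finite S" and "psd A" and "\<forall>i j. i \<notin> S \<or> j \<notin> S \<longrightarrow> A$i$j = 0"
  shows "\<exists>(N::nat) L. \<forall>i j. A$i$j = (\<Sum>t<N. cnj (L t $ i) * L t $ j)"
  using assms
proof (induction S arbitrary: A rule: finite_induct)
  case empty
  then show ?case by (intro exI[of _ 0]) simp
next
  case (insert k S)
  have herm: "hermitian A" using insert.prems by (simp add: psd_def)
  show ?case
  proof (cases "A$k$k = 0")
    case True
    have row: "A$k$j = 0" and col: "A$j$k = 0" for j
      using psd_diag_zero_row[OF insert.prems(1) True] hermitian_cnj_nth[OF herm, of k j] by auto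
    moreover have "\<forall>i j. i \<notin> S \<or> j \<notin> S \<longrightarrow> A$i$j = 0"
    proof (intro allI impI)
      fix i j
      assume "i \<notin> S \<or> j \<notin> S"
      then show "A$i$j = 0"
        using row col insert.prems(2)
        by (cases "i = k"; cases "j = k") auto
    qed
    ultimately show ?thesis
      using insert.IH[OF insert.prems(1)] by blast
  next
    case False
    define B where "B = (\<chi> i j. A$i$j - A$i$k * A$k$j / A$k$k)"
    obtain l where l: "\<And>i j. A$i$k * A$k$j / A$k$k = cnj (l$i) * l$j"
      using psd_pivot_outer_factor[OF insert.prems(1) False] by blast
    have "psd B"
      unfolding B_def using psd_schur_complement[OF insert.prems(1) False] .
    moreover have "\<forall>i j. i \<notin> S \<or> j \<notin> S \<longrightarrow> B$i$j = 0"
    proof (intro allI impI)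
      fix i j
      assume "i \<notin> S \<or> j \<notin> S"
      then show "B$i$j = 0"
        using insert.prems(2) False by (cases "i = k \<or> j = k") (auto simp: B_def)
    qed
    ultimately obtain N :: nat and L where NL: "\<forall>i j. B$i$j = (\<Sum>t<N. cnj (L t $ i) * L t $ j)"
      using insert.IH by blast
    have "A$i$j = (\<Sum>t<Suc N. cnj ((L(N := l)) t $ i) * (L(N := l)) t $ j)" for i j
    proof -
      have "A$i$j = B$i$j + cnj (l$i) * l$j" by (simp add: B_def flip: l)
      then show ?thesis using NL by simp
    qed
    then show ?thesis by blast
  qed
qed

lemma psd_gram:
  fixes A :: "complex ^ 'k::finite ^ 'k"
  assumes "psd A"
  shows "\<exists>(N::nat) L. \<forall>i j. A$i$j = (\<Sum>t<N. cnj (L t $ i) * L t $ j)"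
  using psd_gram_supported[OF finite_class.finite_UNIV assms] by simp

section \<open>Tensor products, conjugation and partial transpose\<close>

lemma hermitian_kron:
  assumes "hermitian A" and "hermitian B"
  shows "hermitian (kron A B)"
  unfolding hermitian_def using assms by (simp add: kron_def)

lemma psd_kron:
  fixes A :: "complex ^ 'a::finite ^ 'a" and B :: "complex ^ 'b::finite ^ 'b"
  assumes psdA: "psd A" and psdB: "psd B"
  shows "psd (kron A B)"
  unfolding psd_iff_sesq
proof (intro conjI allI)
  show "hermitian (kron A B)"
    using psdA psdB by (simp add: psd_def hermitian_kron)
  obtain N :: nat and L where L: "\<forall>i j. A$i$j = (\<Sum>t<N. cnj (L t $ i) * L t $ j)"
    using psd_gram[OF psdA] by blast
  fix v :: "complex ^ ('a \<times> 'b)"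
  define w where "w t = (\<chi> b. \<Sum>a\<in>UNIV. L t $ a * v $ (a, b))" for t
  define G where "G t r c = cnj (v$r) * cnj (L t $ fst r) * L t $ fst c * B $ snd r $ snd c * v $ c"
    for t and r c :: "'a \<times> 'b"
  have "sesq (kron A B) v v = (\<Sum>r\<in>UNIV. \<Sum>c\<in>UNIV. \<Sum>t<N. G t r c)"
    unfolding sesq_def kron_def using L
    by (simp add: sum_distrib_left sum_distrib_right G_def mult_ac)
  also have "\<dots> = (\<Sum>t<N. \<Sum>r\<in>UNIV. \<Sum>c\<in>UNIV. G t r c)"
    by (rule sum_pull_innermost)
  also have "\<dots> = (\<Sum>t<N. sesq B (w t) (w t))"
  proof (rule sum.cong[OF refl])
    fix t
    have "(\<Sum>r\<in>UNIV. \<Sum>c\<in>UNIV. G t r c)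
        = (\<Sum>b\<in>UNIV. \<Sum>b'\<in>UNIV. \<Sum>a\<in>UNIV. \<Sum>a'\<in>UNIV. G t (a, b) (a', b'))"
      by (simp only: sum_UNIV_prod) (rule sum_regroup4)
    also have "\<dots> = sesq B (w t) (w t)"
      unfolding sesq_def w_def by (simp add: sum_distrib_left sum_distrib_right G_def mult_ac)
    finally show "(\<Sum>r\<in>UNIV. \<Sum>c\<in>UNIV. G t r c) = sesq B (w t) (w t)" .
  qed
  finally have "Re (sesq (kron A B) v v) = (\<Sum>t<N. Re (sesq B (w t) (w t)))"
    by simp
  also have "\<dots> \<ge> 0"
    using psdB unfolding psd_iff_sesq by (simp add: sum_nonneg)
  finally show "0 \<le> Re (sesq (kron A B) v v)" .
qed

lemma mtrace_kron: "mtrace (kron A B) = mtrace A * mtrace B"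
  by (simp add: mtrace_def kron_def sum_UNIV_prod sum_product)

lemma is_state_kron: "is_state A \<Longrightarrow> is_state B \<Longrightarrow> is_state (kron A B)"
  unfolding is_state_def by (simp add: psd_kron mtrace_kron)

lemma separable_kron: "is_state A \<Longrightarrow> is_state B \<Longrightarrow> separable (kron A B)"
  unfolding separable_def
  by (intro exI[of _ 1] exI[of _ "\<lambda>_. 1"] exI[of _ "\<lambda>_. A"] exI[of _ "\<lambda>_. B"]) simp

lemma mtrace_mult: "mtrace (A ** B) = (\<Sum>i\<in>UNIV. \<Sum>j\<in>UNIV. A$i$j * B$j$i)"
  by (simp add: mtrace_def matrix_matrix_mult_def)

lemma mtrace_mult_psd_nonneg:
  assumes psdM: "psd M" and psdR: "psd R"
  shows "0 \<le> Re (mtrace (M ** R))"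
proof -
  obtain N :: nat and L where L: "\<forall>i j. R$i$j = (\<Sum>t<N. cnj (L t $ i) * L t $ j)"
    using psd_gram[OF psdR] by blast
  define u where "u t = (\<chi> i. cnj (L t $ i))" for t
  have "mtrace (M ** R) = (\<Sum>i\<in>UNIV. \<Sum>j\<in>UNIV. \<Sum>t<N. L t $ i * M$i$j * cnj (L t $ j))"
    unfolding mtrace_mult using L by (simp add: sum_distrib_left mult_ac)
  also have "\<dots> = (\<Sum>t<N. \<Sum>i\<in>UNIV. \<Sum>j\<in>UNIV. L t $ i * M$i$j * cnj (L t $ j))"
    by (rule sum_pull_innermost)
  also have "\<dots> = (\<Sum>t<N. sesq M (u t) (u t))"
    by (simp add: sesq_def u_def)
  finally have "Re (mtrace (M ** R)) = (\<Sum>t<N. Re (sesq M (u t) (u t)))"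
    by simp
  also have "\<dots> \<ge> 0"
    using psdM unfolding psd_iff_sesq by (simp add: sum_nonneg)
  finally show ?thesis .
qed

lemma psd_not_detects: "psd X \<Longrightarrow> is_state \<rho> \<Longrightarrow> \<not> detects X \<rho>"
  unfolding detects_def is_state_def using mtrace_mult_psd_nonneg by (meson not_le)

lemma psd_not_detects_real_ent: "psd X \<Longrightarrow> \<not> detects_real_ent X"
  unfolding detects_real_ent_def entangled_def using psd_not_detects by blast

lemma ent_witness_not_psd: "ent_witness W \<Longrightarrow> \<not> psd W"
  unfolding ent_witness_def entangled_def using psd_not_detects by blast

lemma realpart_nth: "realpart W $ i $ j = (W$i$j + cnj (W$i$j)) / 2"
  by (simp add: realpart_def mconj_def complex_eq_iff)

lemma hermitian_realpart:
  assumes "hermitian W"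
  shows "hermitian (realpart W)"
  unfolding hermitian_def[of "realpart W"] realpart_nth using assms by (simp add: add.commute)

lemma real_mat_realpart: "real_mat (realpart W)"
  unfolding real_mat_def realpart_nth by (simp add: complex_add_cnj)

lemma mconj_real_mat: "real_mat R \<Longrightarrow> mconj R = R"
  unfolding real_mat_def mconj_def by (simp add: vec_eq_iff Reals_cnj_iff)

lemma mconj_kron: "mconj (kron A B) = kron (mconj A) (mconj B)"
  by (simp add: mconj_def kron_def vec_eq_iff)

lemma is_state_mconj:
  assumes "is_state R"
  shows "is_state (mconj R)"
proof -
  have "hermitian R" using assms by (simp add: is_state_def psd_def)
  then have "hermitian (mconj R)"
    unfolding hermitian_def[of "mconj R"] by (simp add: mconj_def)
  moreover have "sesq (mconj R) v v = cnj (sesq R (\<chi> i. cnj (v$i)) (\<chi> i. cnj (v$i)))" for v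
    by (simp add: sesq_def mconj_def)
  moreover have "mtrace (mconj R) = cnj (mtrace R)"
    by (simp add: mtrace_def mconj_def)
  ultimately show ?thesis
    using assms unfolding is_state_def psd_iff_sesq by simp
qed

lemma Re_mtrace_realpart_mult:
  "Re (mtrace (realpart W ** R)) = (Re (mtrace (W ** R)) + Re (mtrace (W ** mconj R))) / 2"
  unfolding mtrace_mult realpart_nth
  by (simp add: mconj_def sum.distrib sum_divide_distrib add_divide_distrib distrib_right)

lemma detects_realpart_iff: "real_mat \<rho> \<Longrightarrow> detects (realpart W) \<rho> \<longleftrightarrow> detects W \<rho>"
  unfolding detects_def Re_mtrace_realpart_mult by (simp add: mconj_real_mat)

lemma ptrans_kron:
  assumes "hermitian A"
  shows "ptrans (kron A B) = kron (mconj A) B"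
  using assms by (simp add: ptrans_def mconj_def kron_def vec_eq_iff)

lemma mtrace_ptrans_mult: "mtrace (ptrans X ** R) = mtrace (X ** ptrans R)"
proof -
  have "mtrace (ptrans X ** R)
      = (\<Sum>a\<in>UNIV. \<Sum>b\<in>UNIV. \<Sum>a'\<in>UNIV. \<Sum>b'\<in>UNIV. X$(a',b)$(a,b') * R$(a',b')$(a,b))"
    by (simp add: mtrace_mult sum_UNIV_prod ptrans_def)
  also have "\<dots> = (\<Sum>a\<in>UNIV. \<Sum>b\<in>UNIV. \<Sum>a'\<in>UNIV. \<Sum>b'\<in>UNIV. X$(a,b)$(a',b') * R$(a,b')$(a',b))"
    by (rule sum_exchange_outer_inner)
  also have "\<dots> = mtrace (X ** ptrans R)"
    by (simp add: mtrace_mult sum_UNIV_prod ptrans_def)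
  finally show ?thesis .
qed

lemma ptrans_ptrans: "ptrans (ptrans X) = X"
  by (simp add: ptrans_def vec_eq_iff)

lemma ptrans_realpart: "ptrans (realpart X) = realpart (ptrans X)"
  by (simp add: ptrans_def realpart_nth vec_eq_iff)

lemma hermitian_ptrans:
  assumes "hermitian X"
  shows "hermitian (ptrans X)"
  unfolding hermitian_def[of "ptrans X"] using assms by (simp add: ptrans_def)

lemma real_mat_ptrans: "real_mat R \<Longrightarrow> real_mat (ptrans R)"
  unfolding real_mat_def ptrans_def by simp

section \<open>Block positivity\<close>

definition block_positive :: "('m::finite, 'n::finite) bop \<Rightarrow> bool" where
  "block_positive W \<longleftrightarrow> (\<forall>(A :: complex ^ 'm ^ 'm) (B :: complex ^ 'n ^ 'n).
      is_state A \<and> is_state B \<longrightarrow> 0 \<le> Re (mtrace (W ** kron A B)))"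

lemma block_positiveD:
  "block_positive W \<Longrightarrow> is_state A \<Longrightarrow> is_state B \<Longrightarrow> 0 \<le> Re (mtrace (W ** kron A B))"
  by (simp add: block_positive_def)

lemma ent_witness_block_positive: "ent_witness W \<Longrightarrow> block_positive W"
  unfolding ent_witness_def block_positive_def using is_state_kron separable_kron by blast

lemma block_positive_separable:
  assumes bp: "block_positive W" and sep: "separable \<sigma>"
  shows "0 \<le> Re (mtrace (W ** \<sigma>))"
proof -
  obtain K :: nat and p A B
    where states: "\<forall>k<K. 0 \<le> p k \<and> is_state (A k) \<and> is_state (B k)"
      and \<sigma>: "\<sigma> = (\<Sum>k<K. p k *\<^sub>R kron (A k) (B k))"
    using sep unfolding separable_def by blast
  have "mtrace (W ** \<sigma>)
      = (\<Sum>i\<in>UNIV. \<Sum>j\<in>UNIV. \<Sum>k<K. of_real (p k) * (W$i$j * kron (A k) (B k) $ j $ i))"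
    unfolding \<sigma> mtrace_mult by (simp add: sum_distrib_left scaleR_conv_of_real[where 'a=complex] mult_ac)
  also have "\<dots> = (\<Sum>k<K. \<Sum>i\<in>UNIV. \<Sum>j\<in>UNIV. of_real (p k) * (W$i$j * kron (A k) (B k) $ j $ i))"
    by (rule sum_pull_innermost)
  finally have "mtrace (W ** \<sigma>) = (\<Sum>k<K. of_real (p k) * mtrace (W ** kron (A k) (B k)))"
    by (simp add: mtrace_mult sum_distrib_left)
  then have "Re (mtrace (W ** \<sigma>)) = (\<Sum>k<K. p k * Re (mtrace (W ** kron (A k) (B k))))"
    by simp
  also have "\<dots> \<ge> 0"
    using states block_positiveD[OF bp] by (intro sum_nonneg) simp
  finally show ?thesis .
qed

lemma ent_witnessI:
  "hermitian X \<Longrightarrow> block_positive X \<Longrightarrow> entangled \<rho> \<Longrightarrow> detects X \<rho> \<Longrightarrow> ent_witness X"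
  unfolding ent_witness_def using block_positive_separable by blast

lemma block_positive_detects_entangled:
  "block_positive X \<Longrightarrow> is_state \<rho> \<Longrightarrow> detects X \<rho> \<Longrightarrow> entangled \<rho>"
  unfolding entangled_def detects_def using block_positive_separable by (meson not_le)

lemma block_positive_realpart:
  assumes bp: "block_positive W"
  shows "block_positive (realpart W)"
  unfolding block_positive_def
proof (intro allI impI)
  fix A :: "complex ^ 'a ^ 'a" and B :: "complex ^ 'b ^ 'b"
  assume "is_state A \<and> is_state B"
  then have "0 \<le> Re (mtrace (W ** kron A B))" "0 \<le> Re (mtrace (W ** kron (mconj A) (mconj B)))"
    by (simp_all add: block_positiveD[OF bp] is_state_mconj)
  then show "0 \<le> Re (mtrace (realpart W ** kron A B))"
    unfolding Re_mtrace_realpart_mult mconj_kron by simp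
qed

lemma block_positive_ptrans:
  assumes bp: "block_positive W"
  shows "block_positive (ptrans W)"
  unfolding block_positive_def
proof (intro allI impI)
  fix A :: "complex ^ 'a ^ 'a" and B :: "complex ^ 'b ^ 'b"
  assume states: "is_state A \<and> is_state B"
  then have "hermitian A" by (simp add: is_state_def psd_def)
  moreover have "0 \<le> Re (mtrace (W ** kron (mconj A) B))"
    using states by (simp add: block_positiveD[OF bp] is_state_mconj)
  ultimately show "0 \<le> Re (mtrace (ptrans W ** kron A B))"
    by (simp add: mtrace_ptrans_mult ptrans_kron)
qed

section \<open>Pure states and real states\<close>

definition pure_state :: "complex ^ 'k::finite \<Rightarrow> complex ^ 'k ^ 'k" where
  "pure_state v = (\<chi> i j. v$i * cnj (v$j) / of_real ((norm v)\<^sup>2))"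

lemma norm_vec_square: "(norm v)\<^sup>2 = (\<Sum>i\<in>UNIV. (cmod (v$i))\<^sup>2)"
  by (simp add: norm_vec_def L2_set_def sum_nonneg)

lemma mtrace_mult_pure_state: "mtrace (X ** pure_state v) = sesq X v v / of_real ((norm v)\<^sup>2)"
  unfolding mtrace_mult sesq_def pure_state_def by (simp add: sum_divide_distrib mult_ac)

lemma real_mat_pure_state: "(\<forall>i. v$i \<in> \<real>) \<Longrightarrow> real_mat (pure_state v)"
  unfolding real_mat_def pure_state_def by (simp add: Reals_cnj_iff)

lemma is_state_pure_state:
  assumes "v \<noteq> 0"
  shows "is_state (pure_state v)"
  unfolding is_state_def psd_iff_sesq
proof (intro conjI allI)
  define n where "n = (norm v)\<^sup>2"
  have n_pos: "n > 0" using assms by (simp add: n_def)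
  show "hermitian (pure_state v)"
    unfolding hermitian_def pure_state_def by simp
  have "mtrace (pure_state v) = of_real (\<Sum>i\<in>UNIV. (cmod (v$i))\<^sup>2) / of_real n"
    unfolding mtrace_def pure_state_def
    by (simp add: n_def sum_divide_distrib del: of_real_power flip: complex_norm_square)
  then show "mtrace (pure_state v) = 1"
    using n_pos by (simp add: n_def norm_vec_square del: of_real_sum of_real_power)
  fix x :: "complex ^ 'a"
  define s where "s = (\<Sum>i\<in>UNIV. cnj (x$i) * v$i)"
  have "sesq (pure_state v) x x = s * cnj s / of_real n"
    unfolding sesq_def pure_state_def s_def n_def cnj_sum sum_product
    by (simp add: sum_divide_distrib mult_ac)
  then have "Re (sesq (pure_state v) x x) = (cmod s)\<^sup>2 / n"
    by (simp add: Re_divide_of_real del: of_real_power flip: complex_norm_square)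
  then show "0 \<le> Re (sesq (pure_state v) x x)"
    using n_pos by simp
qed

lemma pure_state_of_negative_direction:
  assumes neg: "Re (sesq X v v) < 0"
  shows "is_state (pure_state v)" and "Re (mtrace (X ** pure_state v)) < 0"
proof -
  have "v \<noteq> 0" using neg by (auto simp: sesq_def)
  then show "is_state (pure_state v)" by (rule is_state_pure_state)
  have "Re (mtrace (X ** pure_state v)) = Re (sesq X v v) / (norm v)\<^sup>2"
    unfolding mtrace_mult_pure_state by (simp add: Re_divide_of_real del: of_real_power)
  also have "\<dots> < 0"
    using neg \<open>v \<noteq> 0\<close> by (simp add: divide_neg_pos)
  finally show "Re (mtrace (X ** pure_state v)) < 0" .
qed

lemma sesq_real_in_Reals:
  assumes "real_mat M" "\<forall>i. x$i \<in> \<real>" "\<forall>i. y$i \<in> \<real>"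
  shows "sesq M x y \<in> \<real>"
  using assms unfolding sesq_def real_mat_def by (intro sum_in_Reals Reals_mult) (auto simp: Reals_cnj_iff)

lemma real_mat_sesq_split:
  fixes M :: "complex ^ 'k::finite ^ 'k" and v :: "complex ^ 'k"
  assumes M: "real_mat M"
  defines "u \<equiv> (\<chi> i. complex_of_real (Re (v$i)))" and "w \<equiv> (\<chi> i. complex_of_real (Im (v$i)))"
  shows "Re (sesq M v v) = Re (sesq M u u) + Re (sesq M w w)"
proof -
  have v: "v = (\<chi> i. u$i + \<i> * w$i)" by (simp add: u_def w_def vec_eq_iff complex_eq_iff)
  have "Im (sesq M u w) = 0" "Im (sesq M w u) = 0"
    using sesq_real_in_Reals[OF M] by (simp_all add: u_def w_def complex_is_Real_iff)
  moreover have "sesq M v v = sesq M u u + \<i> * sesq M u w + cnj \<i> * (sesq M w u + \<i> * sesq M w w)"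
    by (subst (1 2) v) (simp add: sesq_add_scaled_left sesq_add_scaled_right algebra_simps)
  ultimately show ?thesis by simp
qed

lemma real_mat_negative_real_direction:
  assumes "real_mat M" "hermitian M" "\<not> psd M"
  obtains v where "\<forall>i. v$i \<in> \<real>" "Re (sesq M v v) < 0"
proof -
  obtain v where neg: "Re (sesq M v v) < 0"
    using assms(2,3) by (auto simp: psd_iff_sesq not_le)
  define u where "u = (\<chi> i. complex_of_real (Re (v$i)))"
  define w where "w = (\<chi> i. complex_of_real (Im (v$i)))"
  have "Re (sesq M u u) < 0 \<or> Re (sesq M w w) < 0"
    using real_mat_sesq_split[OF assms(1), of v] neg unfolding u_def w_def by linarith
  moreover have "\<forall>i. u$i \<in> \<real>" "\<forall>i. w$i \<in> \<real>"
    by (simp_all add: u_def w_def)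
  ultimately show thesis
    using that by blast
qed

section \<open>Block-positive operators and their real parts\<close>

lemma block_positive_psd_or_witness:
  assumes herm: "hermitian X" and bp: "block_positive X"
  shows "psd X \<or> ent_witness X"
proof (cases "psd X")
  case False
  then obtain v where "Re (sesq X v v) < 0"
    using herm by (auto simp: psd_iff_sesq not_le)
  then have "is_state (pure_state v)" "detects X (pure_state v)"
    using pure_state_of_negative_direction by (auto simp: detects_def)
  then show ?thesis
    using ent_witnessI[OF herm bp] block_positive_detects_entangled[OF bp] by blast
qed simp

lemma psd_realpart_iff:
  assumes herm: "hermitian X" and bp: "block_positive X"
  shows "psd (realpart X) \<longleftrightarrow> \<not> detects_real_ent X"
proof
  assume "psd (realpart X)"
  then show "\<not> detects_real_ent X"
    using psd_not_detects detects_realpart_iff unfolding detects_real_ent_def entangled_def by blast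
next
  assume "\<not> detects_real_ent X"
  show "psd (realpart X)"
  proof (rule ccontr)
    assume "\<not> psd (realpart X)"
    then obtain v where real: "\<forall>i. v$i \<in> \<real>" and neg: "Re (sesq (realpart X) v v) < 0"
      using real_mat_negative_real_direction real_mat_realpart hermitian_realpart[OF herm] by blast
    define \<rho> where "\<rho> = pure_state v"
    have "real_mat \<rho>" "is_state \<rho>" "detects X \<rho>"
      using real_mat_pure_state[OF real] pure_state_of_negative_direction[OF neg] detects_realpart_iff
      unfolding \<rho>_def detects_def by auto
    then show False
      using \<open>\<not> detects_real_ent X\<close> block_positive_detects_entangled[OF bp]
      unfolding detects_real_ent_def by blast
  qed
qed

lemma detects_real_ent_realpart_iff: "detects_real_ent (realpart X) \<longleftrightarrow> detects_real_ent X"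
  unfolding detects_real_ent_def using detects_realpart_iff by blast

lemma detects_real_ent_ent_witness:
  "hermitian X \<Longrightarrow> block_positive X \<Longrightarrow> detects_real_ent X \<Longrightarrow> ent_witness X"
  unfolding detects_real_ent_def using ent_witnessI by blast

lemma ent_witness_realpart_iff:
  assumes herm: "hermitian X" and bp: "block_positive X"
  shows "ent_witness (realpart X) \<longleftrightarrow> detects_real_ent X"
proof
  assume "ent_witness (realpart X)"
  then show "detects_real_ent X"
    using ent_witness_not_psd psd_realpart_iff[OF herm bp] by blast
next
  assume "detects_real_ent X"
  then show "ent_witness (realpart X)"
    using detects_real_ent_ent_witness[OF hermitian_realpart[OF herm] block_positive_realpart[OF bp]]
    by (simp add: detects_real_ent_realpart_iff)
qed

lemma NPT_if_detected_by_ptrans: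
  assumes psd: "psd (realpart W)" and real: "real_mat \<rho>" and state: "is_state \<rho>"
    and detected: "detects (ptrans W) \<rho>"
  shows "NPT \<rho>"
proof -
  have "\<not> psd (ptrans \<rho>)"
  proof
    assume "psd (ptrans \<rho>)"
    then have "0 \<le> Re (mtrace (realpart W ** ptrans \<rho>))"
      by (rule mtrace_mult_psd_nonneg[OF psd])
    then show False
      using detected detects_realpart_iff[OF real_mat_ptrans[OF real], of W]
      by (simp add: detects_def mtrace_ptrans_mult)
  qed
  then show ?thesis
    using state by (simp add: NPT_def is_state_def)
qed

theorem corollary1:
  fixes W :: "('m::finite, 'n::finite) bop"
  assumes "ent_witness W"
  shows "(ent_witness (realpart W) \<or> psd (realpart W))
    \<and> (ent_witness (realpart W) \<longleftrightarrow> detects_real_ent W)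
    \<and> (PPT (realpart W) \<longleftrightarrow>
         \<not> detects_real_ent W \<and>
         (NPT (ptrans W) \<or> (ent_witness (ptrans W) \<and> \<not> detects_real_ent (ptrans W))))
    \<and> (NPT (realpart W) \<longleftrightarrow>
         \<not> detects_real_ent W \<and> ent_witness (ptrans W) \<and> detects_real_ent (ptrans W))
    \<and> (NPT (realpart W) \<longrightarrow>
         (\<forall>\<rho>. real_mat \<rho> \<and> entangled \<rho> \<and> detects (ptrans W) \<rho> \<longrightarrow> NPT \<rho>))"
proof -
  have herm: "hermitian W" using assms by (simp add: ent_witness_def)
  have bp: "block_positive W" using assms by (rule ent_witness_block_positive)
  have hermG: "hermitian (ptrans W)" using herm by (rule hermitian_ptrans)
  have bpG: "block_positive (ptrans W)" using bp by (rule block_positive_ptrans)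
  have "psd (realpart W) \<longleftrightarrow> \<not> detects_real_ent W"
    by (rule psd_realpart_iff[OF herm bp])
  moreover have "psd (ptrans (realpart W)) \<longleftrightarrow> \<not> detects_real_ent (ptrans W)"
    unfolding ptrans_realpart by (rule psd_realpart_iff[OF hermG bpG])
  moreover have "ent_witness (realpart W) \<longleftrightarrow> detects_real_ent W"
    by (rule ent_witness_realpart_iff[OF herm bp])
  moreover have "NPT (ptrans W) \<longleftrightarrow> psd (ptrans W)"
    using ent_witness_not_psd[OF assms] by (simp add: NPT_def ptrans_ptrans)
  moreover have "psd (ptrans W) \<or> ent_witness (ptrans W)"
    by (rule block_positive_psd_or_witness[OF hermG bpG])
  ultimately show ?thesis
    using psd_not_detects_real_ent detects_real_ent_ent_witness[OF hermG bpG]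
      NPT_if_detected_by_ptrans[of W]
    by (auto simp: PPT_def NPT_def entangled_def)
qed

end
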